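(* Let $(X,d)$ be a compact metric space, $\mu$ a Borel measure on $X$ with $\mu(X)>0$, $\{f_n\}_{n\in\mathbb{N}}$ a sequence of homeomorphisms of $X$ and $f$ a homeomorphism of $X$ such that $f_n\to f$ uniformly and $f_n^{-1}\to f^{-1}$ uniformly on $X$. Then $x\in UE^\mu_f(X)$ if and only if there exists $\delta>0$ such that for each $z\in B(x,\delta)$, $$\mu\Big(\Big\{y\in B(x,\delta):\ \bigcup_{m\ge 1}\bigcap_{n\ge m}E_z\big(f_n,y,\tfrac{\delta}{3}\big)=\emptyset\Big\}\Big)=0.$$
   Context: $B(x,\epsilon)=\{y:d(x,y)<\epsilon\}$. For a homeomorphism $g$ of $X$, $x,y\in X$ and $\epsilon>0$, $E_y(g,x,\epsilon)=\{k\in\mathbb{Z}: d(g^k(x),g^k(y))>\epsilon\}$. For a point $x$, $\mathfrak{c}>0$ and $z\in B(x,\mathfrak{c})$, $\Gamma^{\mathfrak{c}}_f(z)=\{y\in B(x,\mathfrak{c}): d(f^n(y),f^n(z))\le\mathfrak{c}\ \forall n\in\mathbb{Z}\}$. $x$ is a $\mu$-uniformly expansive point of $f$ if there is $\mathfrak{c}>0$ with $\mu(\Gamma^{\mathfrak{c}}_f(z))=0$ for every $z\in B(x,\mathfrak{c})$; $UE^\mu_f(X)$ is the set of such points. *)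

theory Defs
  imports "HOL-Analysis.Analysis"
begin

definition zit :: "('a \<Rightarrow> 'a) \<Rightarrow> ('a \<Rightarrow> 'a) \<Rightarrow> int \<Rightarrow> 'a \<Rightarrow> 'a" where
  "zit g ginv k = (if k \<ge> 0 then (g ^^ nat k) else (ginv ^^ nat (- k)))"

definition Bl :: "'a::metric_space set \<Rightarrow> 'a \<Rightarrow> real \<Rightarrow> 'a set" where
  "Bl X x e = {y \<in> X. dist x y < e}"

text \<open>E_y(g,x,eps) = {k in Z. d(g^k x, g^k y) > eps}.\<close>
definition Eset :: "('a::metric_space \<Rightarrow> 'a) \<Rightarrow> ('a \<Rightarrow> 'a) \<Rightarrow> 'a \<Rightarrow> 'a \<Rightarrow> real \<Rightarrow> int set" where
  "Eset g ginv y x eps = {k. dist (zit g ginv k x) (zit g ginv k y) > eps}"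

definition Gam :: "'a::metric_space set \<Rightarrow> ('a \<Rightarrow> 'a) \<Rightarrow> ('a \<Rightarrow> 'a) \<Rightarrow> 'a \<Rightarrow> real \<Rightarrow> 'a \<Rightarrow> 'a set" where
  "Gam X f finv x c z = {y \<in> Bl X x c. \<forall>n::int. dist (zit f finv n y) (zit f finv n z) \<le> c}"

definition UE :: "'a::metric_space measure \<Rightarrow> 'a set \<Rightarrow> ('a \<Rightarrow> 'a) \<Rightarrow> ('a \<Rightarrow> 'a) \<Rightarrow> 'a set" where
  "UE M X f finv = {x \<in> X. \<exists>c>0. \<forall>z \<in> Bl X x c. emeasure M (Gam X f finv x c z) = 0}"

end

theory Submission
  imports Defs
begin

text \<open>Uniform convergence of \<open>f\<^sub>n \<rightarrow> f\<close> and \<open>f\<^sub>n\<^sup>-\<^sup>1 \<rightarrow> f\<^sup>-\<^sup>1\<close> makes every integer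
  iterate \<open>f\<^sub>n\<^sup>k y\<close> converge to \<open>f\<^sup>k y\<close>. So if \<open>d(f\<^sub>n\<^sup>k y, f\<^sub>n\<^sup>k z) \<le> \<delta>/3\<close> for infinitely many
  \<open>n\<close>, then \<open>d(f\<^sup>k y, f\<^sup>k z) \<le> \<delta>/3\<close>; and if \<open>d(f\<^sup>k y, f\<^sup>k z) \<le> \<delta>/4\<close>, then
  \<open>d(f\<^sub>n\<^sup>k y, f\<^sub>n\<^sup>k z) < \<delta>/3\<close> for all large \<open>n\<close>. Hence the set in the statement lies in
  \<open>\<Gamma>\<^sup>\<delta>\<^sub>f(z)\<close>, while \<open>\<Gamma>\<^sup>\<delta>\<^sup>/\<^sup>4\<^sub>f(z)\<close> lies in it, and null sets pass along these inclusions.\<close>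

lemma funpow_image_subset: "g ` X \<subseteq> X \<Longrightarrow> (g ^^ j) ` X \<subseteq> X"
  by (induction j) auto

lemma homeomorphism_funpow:
  assumes "homeomorphism X X g ginv"
  shows "homeomorphism X X (g ^^ j) (ginv ^^ j)"
proof (induction j)
  case 0
  show ?case by (simp add: homeomorphism_ident)
next
  case (Suc j)
  from homeomorphism_compose[OF Suc assms] show ?case
    by (metis funpow.simps(2) funpow_Suc_right)
qed

lemma homeomorphism_zit:
  assumes "homeomorphism X X g ginv"
  shows "homeomorphism X X (zit g ginv k) (zit ginv g k)"
  using homeomorphism_funpow[OF assms] homeomorphism_funpow[OF homeomorphism_sym[THEN iffD1, OF assms]]
  by (simp add: zit_def)

lemma borel_measurable_dist_zit:
  assumes "homeomorphism X X g ginv"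
  shows "(\<lambda>y. dist (zit g ginv k y) w) \<in> borel_measurable (restrict_space borel X)"
  using homeomorphism_cont1[OF homeomorphism_zit[OF assms]]
  by (intro borel_measurable_continuous_on_restrict continuous_intros)

lemma tendsto_uniform_limit_compose:
  assumes "uniform_limit X fs f F" "continuous_on X f"
    and "(a \<longlongrightarrow> l) F" "\<forall>\<^sub>F n in F. a n \<in> X" "l \<in> X"
  shows "((\<lambda>n. fs n (a n)) \<longlongrightarrow> f l) F"
proof (rule tendstoI)
  fix e :: real assume "e > 0"
  have "((\<lambda>n. f (a n)) \<longlongrightarrow> f l) F"
    using continuous_on_tendsto_compose[OF assms(2,3,5,4)] .
  then have "\<forall>\<^sub>F n in F. dist (f (a n)) (f l) < e/2"
    using \<open>e > 0\<close> by (intro tendstoD) simp_all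
  moreover have "\<forall>\<^sub>F n in F. \<forall>y\<in>X. dist (fs n y) (f y) < e/2"
    using \<open>e > 0\<close> by (intro uniform_limitD[OF assms(1)]) simp
  ultimately show "\<forall>\<^sub>F n in F. dist (fs n (a n)) (f l) < e"
    using assms(4)
  proof eventually_elim
    case (elim n)
    then have "dist (fs n (a n)) (f (a n)) < e/2" by blast
    with elim(1) show ?case
      using dist_triangle[of "fs n (a n)" "f l" "f (a n)"] by linarith
  qed
qed

lemma funpow_tendsto_of_uniform_limit:
  assumes "\<And>n. fs n ` X \<subseteq> X" "continuous_on X f" "f ` X \<subseteq> X"
    and "uniform_limit X fs f sequentially" "y \<in> X"
  shows "(\<lambda>n. (fs n ^^ j) y) \<longlonglongrightarrow> (f ^^ j) y"
proof (induction j)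
  case 0
  show ?case by simp
next
  case (Suc j)
  have "(fs n ^^ j) y \<in> X" for n
    using funpow_image_subset[OF assms(1)] assms(5) by blast
  moreover have "(f ^^ j) y \<in> X"
    using funpow_image_subset[OF assms(3)] assms(5) by blast
  ultimately show ?case
    using tendsto_uniform_limit_compose[OF assms(4,2) Suc] by simp
qed

lemma zit_tendsto_of_uniform_limit:
  assumes "\<And>n. homeomorphism X X (fs n) (gs n)" "homeomorphism X X f finv"
    and "uniform_limit X fs f sequentially" "uniform_limit X gs finv sequentially"
    and "y \<in> X"
  shows "(\<lambda>n. zit (fs n) (gs n) k y) \<longlonglongrightarrow> zit f finv k y"
proof -
  have fs: "fs n ` X \<subseteq> X" and gs: "gs n ` X \<subseteq> X" for n
    using assms(1)[of n] by (simp_all add: homeomorphism_def)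
  have f: "continuous_on X f" "f ` X \<subseteq> X" and finv: "continuous_on X finv" "finv ` X \<subseteq> X"
    using assms(2) by (simp_all add: homeomorphism_def)
  show ?thesis
    unfolding zit_def
    using funpow_tendsto_of_uniform_limit[OF fs f assms(3,5)]
      funpow_tendsto_of_uniform_limit[OF gs finv assms(4,5)]
    by simp
qed

lemma tendsto_le_of_frequently_le:
  fixes a :: "'b \<Rightarrow> 'c::linorder_topology"
  assumes "(a \<longlongrightarrow> l) F" "\<exists>\<^sub>F n in F. a n \<le> e"
  shows "l \<le> e"
proof (rule ccontr)
  assume "\<not> l \<le> e"
  then have "\<forall>\<^sub>F n in F. e < a n"
    using order_tendstoD(1)[OF assms(1)] by simp
  with assms(2) show False
    by (simp add: frequently_def eventually_mono not_le)
qed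

lemma mem_liminf_iff_eventually:
  "k \<in> (\<Union>m\<in>{1::nat..}. \<Inter>n\<in>{m..}. A n) \<longleftrightarrow> (\<forall>\<^sub>F n in sequentially. k \<in> A n)"
proof
  assume "\<forall>\<^sub>F n in sequentially. k \<in> A n"
  then obtain N where "\<And>n. n \<ge> N \<Longrightarrow> k \<in> A n"
    by (auto simp: eventually_sequentially)
  then show "k \<in> (\<Union>m\<in>{1::nat..}. \<Inter>n\<in>{m..}. A n)"
    by (auto intro!: bexI[of _ "Suc N"])
qed (auto simp: eventually_sequentially)

lemma Eset_liminf_empty_iff:
  "(\<Union>m\<in>{1::nat..}. \<Inter>n\<in>{m..}. Eset (fs n) (gs n) z y e) = {} \<longleftrightarrow>
    (\<forall>k. \<exists>\<^sub>F n in sequentially. dist (zit (fs n) (gs n) k y) (zit (fs n) (gs n) k z) \<le> e)"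
  unfolding all_not_in_conv[symmetric] mem_liminf_iff_eventually not_eventually
  by (simp add: Eset_def not_less)

definition frequently_close ::
    "'a::metric_space set \<Rightarrow> (nat \<Rightarrow> 'a \<Rightarrow> 'a) \<Rightarrow> (nat \<Rightarrow> 'a \<Rightarrow> 'a) \<Rightarrow> 'a \<Rightarrow> real \<Rightarrow> real \<Rightarrow> 'a \<Rightarrow> 'a set"
  where "frequently_close X fs gs x \<delta> e z = {y \<in> Bl X x \<delta>.
    \<forall>k. \<exists>\<^sub>F n in sequentially. dist (zit (fs n) (gs n) k y) (zit (fs n) (gs n) k z) \<le> e}"

lemma liminf_Eset_empty_eq_frequently_close:
  "{y \<in> Bl X x \<delta>. (\<Union>m\<in>{1::nat..}. \<Inter>n\<in>{m..}. Eset (fs n) (gs n) z y e) = {}}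
    = frequently_close X fs gs x \<delta> e z"
  by (simp only: frequently_close_def Eset_liminf_empty_iff)

lemma frequently_close_subset_Gam:
  assumes conv: "\<And>k y. y \<in> X \<Longrightarrow> (\<lambda>n. zit (fs n) (gs n) k y) \<longlonglongrightarrow> zit f finv k y"
    and "z \<in> X" "e \<le> c"
  shows "frequently_close X fs gs x c e z \<subseteq> Gam X f finv x c z"
proof
  fix y assume "y \<in> frequently_close X fs gs x c e z"
  then have y: "y \<in> Bl X x c"
    and freq: "\<And>k. \<exists>\<^sub>F n in sequentially. dist (zit (fs n) (gs n) k y) (zit (fs n) (gs n) k z) \<le> e"
    by (simp_all add: frequently_close_def)
  then have "y \<in> X" by (simp add: Bl_def)
  have "dist (zit f finv k y) (zit f finv k z) \<le> e" for k
    using tendsto_dist[OF conv conv, OF \<open>y \<in> X\<close> \<open>z \<in> X\<close>] freq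
    by (rule tendsto_le_of_frequently_le)
  with y \<open>e \<le> c\<close> show "y \<in> Gam X f finv x c z"
    unfolding Gam_def by (auto intro: order_trans)
qed

lemma Gam_subset_frequently_close:
  assumes conv: "\<And>k y. y \<in> X \<Longrightarrow> (\<lambda>n. zit (fs n) (gs n) k y) \<longlonglongrightarrow> zit f finv k y"
    and "z \<in> X" "c < e" "c \<le> \<delta>"
  shows "Gam X f finv x c z \<subseteq> frequently_close X fs gs x \<delta> e z"
proof
  fix y assume y: "y \<in> Gam X f finv x c z"
  then have "y \<in> X" by (simp add: Gam_def Bl_def)
  have "\<exists>\<^sub>F n in sequentially. dist (zit (fs n) (gs n) k y) (zit (fs n) (gs n) k z) \<le> e" for k
  proof -
    have "dist (zit f finv k y) (zit f finv k z) \<le> c"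
      using y by (simp add: Gam_def)
    with \<open>c < e\<close> have "dist (zit f finv k y) (zit f finv k z) < e"
      by linarith
    from order_tendstoD(2)[OF tendsto_dist[OF conv conv, OF \<open>y \<in> X\<close> \<open>z \<in> X\<close>] this]
    have "\<forall>\<^sub>F n in sequentially. dist (zit (fs n) (gs n) k y) (zit (fs n) (gs n) k z) \<le> e"
      by (rule eventually_mono) simp
    then show ?thesis
      by (simp add: eventually_frequently)
  qed
  moreover have "y \<in> Bl X x \<delta>"
    using y \<open>c \<le> \<delta>\<close> by (simp add: Gam_def Bl_def)
  ultimately show "y \<in> frequently_close X fs gs x \<delta> e z"
    by (simp add: frequently_close_def)
qed

lemma borel_measurable_dist_restrict [measurable]:
  "(\<lambda>y. dist x y) \<in> borel_measurable (restrict_space borel X)"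
  by (intro borel_measurable_continuous_on_restrict continuous_intros)

lemma Gam_measurable:
  assumes "homeomorphism X X f finv"
  shows "Gam X f finv x c z \<in> sets (restrict_space borel X)"
proof -
  note [measurable] = borel_measurable_dist_zit[OF assms]
  have "Gam X f finv x c z = {y \<in> space (restrict_space borel X).
      dist x y < c \<and> (\<forall>n. dist (zit f finv n y) (zit f finv n z) \<le> c)}"
    by (auto simp: Gam_def Bl_def space_restrict_space)
  then show ?thesis by (simp only:) measurable
qed

lemma frequently_close_measurable:
  assumes "\<And>n. homeomorphism X X (fs n) (gs n)"
  shows "frequently_close X fs gs x \<delta> e z \<in> sets (restrict_space borel X)"
proof -
  note [measurable] = borel_measurable_dist_zit[OF assms]
  have "frequently_close X fs gs x \<delta> e z = {y \<in> space (restrict_space borel X). dist x y < \<delta> \<and>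
      (\<forall>k N. \<exists>n\<ge>N. dist (zit (fs n) (gs n) k y) (zit (fs n) (gs n) k z) \<le> e)}"
    by (auto simp: frequently_close_def frequently_sequentially Bl_def space_restrict_space)
  then show ?thesis by (simp only:) measurable
qed


theorem theorem3p6:
  fixes X :: "'a::metric_space set" and M :: "'a measure"
    and fs gs :: "nat \<Rightarrow> 'a \<Rightarrow> 'a" and f finv :: "'a \<Rightarrow> 'a" and x :: 'a
  assumes "compact X"
    and "sets M = sets (restrict_space borel X)"
    and "emeasure M X > 0"
    and "\<And>n. homeomorphism X X (fs n) (gs n)"
    and "homeomorphism X X f finv"
    and "uniform_limit X fs f sequentially"
    and "uniform_limit X gs finv sequentially"
    and "x \<in> X"
  shows "x \<in> UE M X f finv \<longleftrightarrow>
    (\<exists>\<delta>>0. \<forall>z \<in> Bl X x \<delta>.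
       emeasure M {y \<in> Bl X x \<delta>.
          (\<Union>m\<in>{1::nat..}. \<Inter>n\<in>{m..}. Eset (fs n) (gs n) z y (\<delta>/3)) = {}} = 0)"
proof -
  have conv: "\<And>k y. y \<in> X \<Longrightarrow> (\<lambda>n. zit (fs n) (gs n) k y) \<longlonglongrightarrow> zit f finv k y"
    by (rule zit_tendsto_of_uniform_limit[OF assms(4-7)])
  have Gam_sets: "Gam X f finv x c z \<in> sets M" for c z
    using Gam_measurable[OF assms(5)] assms(2) by simp
  have close_sets: "frequently_close X fs gs x \<delta> e z \<in> sets M" for \<delta> e z
    using frequently_close_measurable[OF assms(4)] assms(2) by simp
  show ?thesis
    unfolding liminf_Eset_empty_eq_frequently_close
  proof
    assume "x \<in> UE M X f finv"
    then obtain c where "c > 0" and null: "\<And>z. z \<in> Bl X x c \<Longrightarrow> emeasure M (Gam X f finv x c z) = 0"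
      unfolding UE_def by auto
    have "emeasure M (frequently_close X fs gs x c (c/3) z) = 0" if "z \<in> Bl X x c" for z
      by (rule emeasure_eq_0[OF Gam_sets null[OF that] frequently_close_subset_Gam[OF conv]])
        (use that \<open>c > 0\<close> in \<open>auto simp: Bl_def\<close>)
    with \<open>c > 0\<close> show "\<exists>\<delta>>0. \<forall>z\<in>Bl X x \<delta>. emeasure M (frequently_close X fs gs x \<delta> (\<delta>/3) z) = 0"
      by blast
  next
    assume "\<exists>\<delta>>0. \<forall>z\<in>Bl X x \<delta>. emeasure M (frequently_close X fs gs x \<delta> (\<delta>/3) z) = 0"
    then obtain \<delta> where "\<delta> > 0"
      and null: "\<And>z. z \<in> Bl X x \<delta> \<Longrightarrow> emeasure M (frequently_close X fs gs x \<delta> (\<delta>/3) z) = 0"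
      by blast
    have "emeasure M (Gam X f finv x (\<delta>/4) z) = 0" if "z \<in> Bl X x (\<delta>/4)" for z
      by (rule emeasure_eq_0[OF close_sets null Gam_subset_frequently_close[OF conv]])
        (use that \<open>\<delta> > 0\<close> in \<open>auto simp: Bl_def\<close>)
    with \<open>\<delta> > 0\<close> \<open>x \<in> X\<close> show "x \<in> UE M X f finv"
      unfolding UE_def by (intro CollectI conjI exI[of _ "\<delta>/4"]) auto
  qed
qed

end
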